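(* Let $S$ be a partial semigroup and let $\mathcal{S}_0,\mathcal{S}_1$ be function arrays over $S$ indexed by finite sets $\Lambda_0,\Lambda_1$ respectively. Then there is a homomorphism of function arrays $\gamma\mathcal{S}_0\otimes\gamma\mathcal{S}_1\to\gamma(\mathcal{S}_0\otimes\mathcal{S}_1)$.
   Context: Partial semigroup: partial operation with $(rs)t$ defined iff $r(st)$ defined, and then equal. A function array over $S$ indexed by non-empty $\Lambda$ and based on a set $X$ assigns to each $\lambda\in\Lambda$ a partial function $\lambda$ from $X$ to $S$ such that for all $s_0,\dots,s_k\in S$ there is $x\in X$ with all $s_i\lambda(x)$ defined. Total: $S$ a semigroup and all $\lambda$ defined everywhere. For $\mathcal{S}$ based on $X$: $\gamma S$ = ultrafilters $\mathcal{U}$ on $S$ with $\{t: st\text{ defined}\}\in\mathcal{U}$ for all $s$, with $B\in\mathcal{U}*\mathcal{V}$ iff $\{s:\{t: st\text{ defined},\ st\in B\}\in\mathcal{V}\}\in\mathcal{U}$ (a semigroup); $\gamma X$ = ultrafilters $\mathcal{U}$ on $X$ with $\{x: s\lambda(x)\text{ defined}\}\in\mathcal{U}$ for all $s,\lambda$; $\lambda$ extends to $\gamma X\to\gamma S$ by $B\in\lambda(\mathcal{U})$ iff $\lambda^{-1}(B)\in\mathcal{U}$; $\gamma\mathcal{S}$ is the total function array over $\gamma S$ indexed by $\Lambda$ based on $\gamma X$. Tensor product: for finite $\Lambda_0,\Lambda_1$ let $\Lambda_0\star\Lambda_1=\Lambda_0\sqcup\Lambda_1\sqcup(\Lambda_0\times\Lambda_1)$;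 for function arrays $\mathcal{S}_i$ over the same partial semigroup $S$ indexed by $\Lambda_i$ and based on $X_i$, $\mathcal{S}_0\otimes\mathcal{S}_1$ is the function array over $S$ indexed by $\Lambda_0\star\Lambda_1$ and based on $X_0\times X_1$ given by $\lambda_0(x_0,x_1)=\lambda_0(x_0)$, $\lambda_1(x_0,x_1)=\lambda_1(x_1)$, $(\lambda_0,\lambda_1)(x_0,x_1)=\lambda_0(x_0)\lambda_1(x_1)$ (defined when this product is). A homomorphism between total function arrays $\mathcal{A}$ (over $A$, based on $X$) and $\mathcal{B}$ (over $B$, based on $Y$) indexed by the same set is a pair $(f,g)$, $f\colon X\to Y$, $g\colon A\to B$ a semigroup homomorphism, with $\lambda(f(x))=g(\lambda(x))$ for all $x,\lambda$. *)

theory Defs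
  imports Main
begin

definition partial_semigroup :: "'a set \<Rightarrow> ('a \<Rightarrow> 'a \<Rightarrow> 'a option) \<Rightarrow> bool" where
  "partial_semigroup S p \<longleftrightarrow>
     (\<forall>s\<in>S. \<forall>t\<in>S. \<forall>u. p s t = Some u \<longrightarrow> u \<in> S) \<and>
     (\<forall>r\<in>S. \<forall>s\<in>S. \<forall>t\<in>S.
        Option.bind (p r s) (\<lambda>u. p u t) = Option.bind (p s t) (\<lambda>v. p r v))"

definition app_defined :: "('a \<Rightarrow> 'a \<Rightarrow> 'a option) \<Rightarrow> 'a \<Rightarrow> 'a option \<Rightarrow> bool" where
  "app_defined p s y \<longleftrightarrow> (\<exists>u. y = Some u \<and> p s u \<noteq> None)"

definition function_array ::
  "'a set \<Rightarrow> ('a \<Rightarrow> 'a \<Rightarrow> 'a option) \<Rightarrow> 'i set \<Rightarrow> ('i \<Rightarrow> 'x \<Rightarrow> 'a option) \<Rightarrow> 'x set \<Rightarrow> bool" where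
  "function_array S p Lam lam X \<longleftrightarrow>
     Lam \<noteq> {} \<and>
     (\<forall>i\<in>Lam. \<forall>x\<in>X. \<forall>u. lam i x = Some u \<longrightarrow> u \<in> S) \<and>
     (\<forall>F. finite F \<and> F \<noteq> {} \<and> F \<subseteq> S \<longrightarrow>
        (\<exists>x\<in>X. \<forall>s\<in>F. \<forall>i\<in>Lam. app_defined p s (lam i x)))"

definition ultrafilter_on :: "'a set \<Rightarrow> 'a set set \<Rightarrow> bool" where
  "ultrafilter_on A U \<longleftrightarrow>
     U \<subseteq> Pow A \<and> A \<in> U \<and> {} \<notin> U \<and>
     (\<forall>B\<in>U. \<forall>C\<in>U. B \<inter> C \<in> U) \<and>
     (\<forall>B\<in>U. \<forall>C. B \<subseteq> C \<and> C \<subseteq> A \<longrightarrow> C \<in> U) \<and>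
     (\<forall>B. B \<subseteq> A \<longrightarrow> B \<in> U \<or> A - B \<in> U)"

definition gammaS :: "'a set \<Rightarrow> ('a \<Rightarrow> 'a \<Rightarrow> 'a option) \<Rightarrow> 'a set set set" where
  "gammaS S p = {U. ultrafilter_on S U \<and> (\<forall>s\<in>S. {t\<in>S. p s t \<noteq> None} \<in> U)}"

definition gamma_mult :: "'a set \<Rightarrow> ('a \<Rightarrow> 'a \<Rightarrow> 'a option) \<Rightarrow> 'a set set \<Rightarrow> 'a set set \<Rightarrow> 'a set set" where
  "gamma_mult S p U V =
     {B. B \<subseteq> S \<and> {s\<in>S. {t\<in>S. \<exists>u. p s t = Some u \<and> u \<in> B} \<in> V} \<in> U}"

text \<open>The (total) operation of gamma S, written as a partial operation that is always defined.\<close>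

definition gamma_op :: "'a set \<Rightarrow> ('a \<Rightarrow> 'a \<Rightarrow> 'a option) \<Rightarrow> 'a set set \<Rightarrow> 'a set set \<Rightarrow> 'a set set option" where
  "gamma_op S p U V = Some (gamma_mult S p U V)"

definition gammaX ::
  "'a set \<Rightarrow> ('a \<Rightarrow> 'a \<Rightarrow> 'a option) \<Rightarrow> 'i set \<Rightarrow> ('i \<Rightarrow> 'x \<Rightarrow> 'a option) \<Rightarrow> 'x set \<Rightarrow> 'x set set set" where
  "gammaX S p Lam lam X =
     {U. ultrafilter_on X U \<and>
         (\<forall>s\<in>S. \<forall>i\<in>Lam. {x\<in>X. app_defined p s (lam i x)} \<in> U)}"

definition gamma_lam ::
  "'a set \<Rightarrow> ('i \<Rightarrow> 'x \<Rightarrow> 'a option) \<Rightarrow> 'x set \<Rightarrow> 'i \<Rightarrow> 'x set set \<Rightarrow> 'a set set option" where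
  "gamma_lam S lam X i U = Some {B. B \<subseteq> S \<and> {x\<in>X. \<exists>u. lam i x = Some u \<and> u \<in> B} \<in> U}"

datatype ('i, 'j) star_idx = SL 'i | SR 'j | SP 'i 'j

definition star_set :: "'i set \<Rightarrow> 'j set \<Rightarrow> ('i, 'j) star_idx set" where
  "star_set L0 L1 = SL ` L0 \<union> SR ` L1 \<union> (\<lambda>(i, j). SP i j) ` (L0 \<times> L1)"

fun tensor ::
  "('a \<Rightarrow> 'a \<Rightarrow> 'a option) \<Rightarrow> ('i \<Rightarrow> 'x \<Rightarrow> 'a option) \<Rightarrow> ('j \<Rightarrow> 'y \<Rightarrow> 'a option)
   \<Rightarrow> ('i, 'j) star_idx \<Rightarrow> 'x \<times> 'y \<Rightarrow> 'a option" where
  "tensor p lam0 lam1 (SL i) (x, y) = lam0 i x"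
| "tensor p lam0 lam1 (SR j) (x, y) = lam1 j y"
| "tensor p lam0 lam1 (SP i j) (x, y) =
     Option.bind (lam0 i x) (\<lambda>a. Option.bind (lam1 j y) (\<lambda>b. p a b))"

text \<open>Operations/maps are given in option form; for total arrays they are always Some,
  and the conditions below say g(ab) = g(a)g(b) and lamB(f x) = g(lamA x).\<close>

definition fa_hom ::
  "'a set \<Rightarrow> ('a \<Rightarrow> 'a \<Rightarrow> 'a option) \<Rightarrow> 'i set \<Rightarrow> ('i \<Rightarrow> 'x \<Rightarrow> 'a option) \<Rightarrow> 'x set
   \<Rightarrow> 'b set \<Rightarrow> ('b \<Rightarrow> 'b \<Rightarrow> 'b option) \<Rightarrow> ('i \<Rightarrow> 'y \<Rightarrow> 'b option) \<Rightarrow> 'y set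
   \<Rightarrow> ('x \<Rightarrow> 'y) \<Rightarrow> ('a \<Rightarrow> 'b) \<Rightarrow> bool" where
  "fa_hom A mA Lam lamA X B mB lamB Y f g \<longleftrightarrow>
     (\<forall>x\<in>X. f x \<in> Y) \<and>
     (\<forall>a\<in>A. g a \<in> B) \<and>
     (\<forall>a\<in>A. \<forall>b\<in>A. mB (g a) (g b) = map_option g (mA a b)) \<and>
     (\<forall>i\<in>Lam. \<forall>x\<in>X. lamB i (f x) = map_option g (lamA i x))"

end

theory Submission
  imports Defs
begin

text \<open>The homomorphism is the identity on \<open>\<gamma>S\<close> together with the Fubini product
  \<open>(\<U>, \<V>) \<mapsto> \<U> \<otimes> \<V>\<close>, where \<open>C \<in> \<U> \<otimes> \<V>\<close> iff \<open>{x. {y. (x, y) \<in> C} \<in> \<V>} \<in> \<U>\<close>.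
  Pushing \<open>\<U> \<otimes> \<V>\<close> forward along \<open>(x, y) \<mapsto> \<lambda>\<^sub>0(x)\<lambda>\<^sub>1(y)\<close> unfolds to exactly the
  definition of \<open>\<lambda>\<^sub>0(\<U>) * \<lambda>\<^sub>1(\<V>)\<close>, and the product maps \<open>\<gamma>X\<^sub>0 \<times> \<gamma>X\<^sub>1\<close> into
  \<open>\<gamma>(X\<^sub>0 \<times> X\<^sub>1)\<close> because, by associativity, \<open>s\<lambda>\<^sub>0(x)\<lambda>\<^sub>1(y)\<close> is defined as soon as
  \<open>s\<lambda>\<^sub>0(x)\<close> is defined and \<open>(s\<lambda>\<^sub>0(x))\<lambda>\<^sub>1(y)\<close> is defined. Finiteness of the index
  sets plays no role.\<close>

lemma ultrafilter_onI:
  assumes sub: "U \<subseteq> Pow A" and top: "A \<in> U"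
    and Diff: "\<And>B. B \<subseteq> A \<Longrightarrow> A - B \<in> U \<longleftrightarrow> B \<notin> U"
    and Int: "\<And>B C. B \<subseteq> A \<Longrightarrow> C \<subseteq> A \<Longrightarrow> B \<inter> C \<in> U \<longleftrightarrow> B \<in> U \<and> C \<in> U"
  shows "ultrafilter_on A U"
  unfolding ultrafilter_on_def
proof (intro conjI ballI allI impI sub top)
  show "{} \<notin> U"
    using top Diff[of A] by simp
  show "B \<inter> C \<in> U" if "B \<in> U" "C \<in> U" for B C
    using that sub Int[of B C] by blast
  show "C \<in> U" if "B \<in> U" and "B \<subseteq> C \<and> C \<subseteq> A" for B C
  proof -
    have "B \<inter> C = B"
      using that by blast
    then show ?thesis
      using that Int[of B C] sub by auto
  qed
  show "B \<in> U \<or> A - B \<in> U" if "B \<subseteq> A" for B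
    using Diff[OF that] by blast
qed

context
  fixes A :: "'a set" and U :: "'a set set"
  assumes U: "ultrafilter_on A U"
begin

lemma ultrafilter_on_top: "A \<in> U"
  using U by (simp add: ultrafilter_on_def)

lemma ultrafilter_on_empty: "{} \<notin> U"
  using U by (simp add: ultrafilter_on_def)

lemma ultrafilter_on_Int: "B \<in> U \<Longrightarrow> C \<in> U \<Longrightarrow> B \<inter> C \<in> U"
  using U by (simp add: ultrafilter_on_def)

lemma ultrafilter_on_mono: "B \<in> U \<Longrightarrow> B \<subseteq> C \<Longrightarrow> C \<subseteq> A \<Longrightarrow> C \<in> U"
  using U unfolding ultrafilter_on_def by (elim conjE) blast

lemma ultrafilter_on_Int_iff:
  assumes "B \<subseteq> A" "C \<subseteq> A"
  shows "B \<inter> C \<in> U \<longleftrightarrow> B \<in> U \<and> C \<in> U"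
proof (intro iffI conjI)
  assume "B \<inter> C \<in> U"
  then show "B \<in> U" "C \<in> U"
    using assms ultrafilter_on_mono[of "B \<inter> C"] by auto
qed (auto intro: ultrafilter_on_Int)

lemma ultrafilter_on_Diff_iff:
  assumes "B \<subseteq> A"
  shows "A - B \<in> U \<longleftrightarrow> B \<notin> U"
proof (intro iffI notI)
  assume "A - B \<in> U" and "B \<in> U"
  then have "B \<inter> (A - B) \<in> U"
    by (rule ultrafilter_on_Int[rotated])
  then show False
    using ultrafilter_on_empty by simp
next
  show "B \<notin> U \<Longrightarrow> A - B \<in> U"
    using U assms unfolding ultrafilter_on_def by (elim conjE) blast
qed

lemma ultrafilter_on_const: "{x \<in> A. P} \<in> U \<longleftrightarrow> P"
  using ultrafilter_on_top ultrafilter_on_empty by (cases P) simp_all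

end

definition ultrafilter_prod :: "'x set \<Rightarrow> 'y set \<Rightarrow> 'x set set \<Rightarrow> 'y set set \<Rightarrow> ('x \<times> 'y) set set" where
  "ultrafilter_prod X Y U V = {C. C \<subseteq> X \<times> Y \<and> {x \<in> X. {y \<in> Y. (x, y) \<in> C} \<in> V} \<in> U}"

lemma Collect_in_ultrafilter_prod_iff:
  "{z \<in> X \<times> Y. P z} \<in> ultrafilter_prod X Y U V \<longleftrightarrow> {x \<in> X. {y \<in> Y. P (x, y)} \<in> V} \<in> U"
proof -
  have "{x \<in> X. {y \<in> Y. (x, y) \<in> {z \<in> X \<times> Y. P z}} \<in> V} = {x \<in> X. {y \<in> Y. P (x, y)} \<in> V}"
    by (rule Collect_cong) (auto intro!: arg_cong[where f = "\<lambda>B. B \<in> V"])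
  then show ?thesis
    unfolding ultrafilter_prod_def by auto
qed

lemma ultrafilter_on_prod:
  assumes U: "ultrafilter_on X U" and V: "ultrafilter_on Y V"
  shows "ultrafilter_on (X \<times> Y) (ultrafilter_prod X Y U V)"
proof (rule ultrafilter_onI)
  define large_fibres where "large_fibres C = {x \<in> X. {y \<in> Y. (x, y) \<in> C} \<in> V}" for C
  have mem: "C \<in> ultrafilter_prod X Y U V \<longleftrightarrow> large_fibres C \<in> U" if "C \<subseteq> X \<times> Y" for C
    using that unfolding ultrafilter_prod_def large_fibres_def by simp
  show "ultrafilter_prod X Y U V \<subseteq> Pow (X \<times> Y)"
    unfolding ultrafilter_prod_def by auto
  have "large_fibres (X \<times> Y) = X"
    using ultrafilter_on_top[OF V] unfolding large_fibres_def by auto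
  then show "X \<times> Y \<in> ultrafilter_prod X Y U V"
    using mem ultrafilter_on_top[OF U] by simp
  show "X \<times> Y - B \<in> ultrafilter_prod X Y U V \<longleftrightarrow> B \<notin> ultrafilter_prod X Y U V"
    if "B \<subseteq> X \<times> Y" for B
  proof -
    have "{y \<in> Y. (x, y) \<in> X \<times> Y - B} = Y - {y \<in> Y. (x, y) \<in> B}" if "x \<in> X" for x
      using that by auto
    then have "large_fibres (X \<times> Y - B) = X - large_fibres B"
      unfolding large_fibres_def by (auto simp: ultrafilter_on_Diff_iff[OF V])
    then show ?thesis
      using that mem[of B] mem[of "X \<times> Y - B"] ultrafilter_on_Diff_iff[OF U, of "large_fibres B"]
      by (auto simp: large_fibres_def)
  qed
  show "B \<inter> C \<in> ultrafilter_prod X Y U V \<longleftrightarrow>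
      B \<in> ultrafilter_prod X Y U V \<and> C \<in> ultrafilter_prod X Y U V"
    if "B \<subseteq> X \<times> Y" "C \<subseteq> X \<times> Y" for B C
  proof -
    have "{y \<in> Y. (x, y) \<in> B \<inter> C} = {y \<in> Y. (x, y) \<in> B} \<inter> {y \<in> Y. (x, y) \<in> C}" for x
      by auto
    then have "large_fibres (B \<inter> C) = large_fibres B \<inter> large_fibres C"
      unfolding large_fibres_def by (auto simp: ultrafilter_on_Int_iff[OF V])
    then show ?thesis
      using that mem[of B] mem[of C] mem[of "B \<inter> C"] ultrafilter_on_Int_iff[OF U, of "large_fibres B" "large_fibres C"]
      by (auto simp: large_fibres_def)
  qed
qed

lemma gamma_lam_tensor_SL:
  assumes "ultrafilter_on X1 V"
  shows "gamma_lam S (tensor p lam0 lam1) (X0 \<times> X1) (SL i) (ultrafilter_prod X0 X1 U V)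
    = gamma_lam S lam0 X0 i U"
  unfolding gamma_lam_def
  by (simp add: Collect_in_ultrafilter_prod_iff ultrafilter_on_const[OF assms])

lemma gamma_lam_tensor_SR:
  assumes "ultrafilter_on X0 U"
  shows "gamma_lam S (tensor p lam0 lam1) (X0 \<times> X1) (SR j) (ultrafilter_prod X0 X1 U V)
    = gamma_lam S lam1 X1 j V"
  unfolding gamma_lam_def
  by (simp add: Collect_in_ultrafilter_prod_iff ultrafilter_on_const[OF assms])

lemma gamma_lam_tensor_SP:
  assumes V: "ultrafilter_on X1 V"
    and range0: "\<forall>x\<in>X0. set_option (lam0 i x) \<subseteq> S"
    and range1: "\<forall>y\<in>X1. set_option (lam1 j y) \<subseteq> S"
  shows "gamma_lam S (tensor p lam0 lam1) (X0 \<times> X1) (SP i j) (ultrafilter_prod X0 X1 U V)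
    = tensor (gamma_op S p) (gamma_lam S lam0 X0) (gamma_lam S lam1 X1) (SP i j) (U, V)"
proof -
  define hits where "hits B a = {y \<in> X1. \<exists>b. lam1 j y = Some b \<and> b \<in> S \<and>
      (\<exists>u. p a b = Some u \<and> u \<in> B)}" for B a
  have fibre: "{y \<in> X1. \<exists>u. tensor p lam0 lam1 (SP i j) (x, y) = Some u \<and> u \<in> B} \<in> V
      \<longleftrightarrow> (\<exists>a. lam0 i x = Some a \<and> a \<in> S \<and> hits B a \<in> V)" if "x \<in> X0" for x B
  proof (cases "lam0 i x")
    case None
    then show ?thesis
      using ultrafilter_on_empty[OF V] by simp
  next
    case (Some a)
    have "{y \<in> X1. \<exists>u. tensor p lam0 lam1 (SP i j) (x, y) = Some u \<and> u \<in> B} = hits B a"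
      using Some range1 unfolding hits_def by (fastforce split: Option.bind_splits)
    then show ?thesis
      using Some range0 that by auto
  qed
  have "{x \<in> X0. {y \<in> X1. \<exists>u. tensor p lam0 lam1 (SP i j) (x, y) = Some u \<and> u \<in> B} \<in> V}
      = {x \<in> X0. \<exists>a. lam0 i x = Some a \<and> a \<in> {s \<in> S. hits B s \<in> V}}" for B
    using fibre by blast
  then show ?thesis
    unfolding gamma_lam_def gamma_op_def gamma_mult_def
    by (auto simp: Collect_in_ultrafilter_prod_iff hits_def)
qed

lemma gamma_lam_tensor:
  assumes U: "ultrafilter_on X0 U" and V: "ultrafilter_on X1 V"
    and range0: "\<forall>i\<in>L0. \<forall>x\<in>X0. set_option (lam0 i x) \<subseteq> S"
    and range1: "\<forall>j\<in>L1. \<forall>y\<in>X1. set_option (lam1 j y) \<subseteq> S"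
    and "k \<in> star_set L0 L1"
  shows "gamma_lam S (tensor p lam0 lam1) (X0 \<times> X1) k (ultrafilter_prod X0 X1 U V)
    = tensor (gamma_op S p) (gamma_lam S lam0 X0) (gamma_lam S lam1 X1) k (U, V)"
proof -
  from \<open>k \<in> star_set L0 L1\<close> consider i where "k = SL i" | j where "k = SR j"
    | i j where "k = SP i j" "i \<in> L0" "j \<in> L1"
    unfolding star_set_def by auto
  then show ?thesis
  proof cases
    case (3 i j)
    then show ?thesis
      using gamma_lam_tensor_SP[OF V, of X0 lam0 i S lam1 j p U] range0 range1 by simp
  qed (simp_all add: gamma_lam_tensor_SL[OF V] gamma_lam_tensor_SR[OF U])
qed

lemma partial_semigroup_defined_assoc:
  assumes "partial_semigroup S p" and "r \<in> S" "s \<in> S" "t \<in> S"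
    and "p r s = Some u" and "p u t \<noteq> None"
  shows "\<exists>v. p s t = Some v \<and> p r v \<noteq> None"
proof -
  have "Option.bind (p r s) (\<lambda>u. p u t) = Option.bind (p s t) (\<lambda>v. p r v)"
    using assms(1-4) unfolding partial_semigroup_def by blast
  then have "Option.bind (p s t) (\<lambda>v. p r v) \<noteq> None"
    using assms(5,6) by simp
  then show ?thesis
    by (cases "p s t") auto
qed

lemma tensor_SP_defined_in_prod:
  assumes ps: "partial_semigroup S p" and "s \<in> S"
    and U: "ultrafilter_on X0 U" and V: "ultrafilter_on X1 V"
    and range0: "\<forall>x\<in>X0. set_option (lam0 i x) \<subseteq> S"
    and range1: "\<forall>y\<in>X1. set_option (lam1 j y) \<subseteq> S"
    and defined0: "{x \<in> X0. app_defined p s (lam0 i x)} \<in> U"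
    and defined1: "\<forall>c\<in>S. {y \<in> X1. app_defined p c (lam1 j y)} \<in> V"
  shows "{z \<in> X0 \<times> X1. app_defined p s (tensor p lam0 lam1 (SP i j) z)} \<in> ultrafilter_prod X0 X1 U V"
proof -
  let ?large_fibres = "{x \<in> X0. {y \<in> X1. app_defined p s (tensor p lam0 lam1 (SP i j) (x, y))} \<in> V}"
  have "x \<in> ?large_fibres" if x: "x \<in> X0" "app_defined p s (lam0 i x)" for x
  proof -
    obtain a c where a: "lam0 i x = Some a" and c: "p s a = Some c"
      using x unfolding app_defined_def by auto
    have "a \<in> S"
      using a x range0 by auto
    then have "c \<in> S"
      using c ps \<open>s \<in> S\<close> unfolding partial_semigroup_def by blast
    have "{y \<in> X1. app_defined p c (lam1 j y)}
        \<subseteq> {y \<in> X1. app_defined p s (tensor p lam0 lam1 (SP i j) (x, y))}"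
    proof safe
      fix y assume "y \<in> X1" "app_defined p c (lam1 j y)"
      then obtain b where b: "lam1 j y = Some b" "b \<in> S" "p c b \<noteq> None"
        using range1 unfolding app_defined_def by auto
      then obtain v where "p a b = Some v" "p s v \<noteq> None"
        using partial_semigroup_defined_assoc[OF ps \<open>s \<in> S\<close> \<open>a \<in> S\<close> \<open>b \<in> S\<close> c] by blast
      then show "app_defined p s (tensor p lam0 lam1 (SP i j) (x, y))"
        using a b unfolding app_defined_def by simp
    qed
    then show ?thesis
      using defined1 \<open>c \<in> S\<close> x ultrafilter_on_mono[OF V] by blast
  qed
  then have "?large_fibres \<in> U"
    by (intro ultrafilter_on_mono[OF U defined0]) auto
  then show ?thesis
    by (simp add: Collect_in_ultrafilter_prod_iff)
qed

lemma ultrafilter_prod_in_gammaX: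
  assumes ps: "partial_semigroup S p"
    and range0: "\<forall>i\<in>L0. \<forall>x\<in>X0. set_option (lam0 i x) \<subseteq> S"
    and range1: "\<forall>j\<in>L1. \<forall>y\<in>X1. set_option (lam1 j y) \<subseteq> S"
    and "U \<in> gammaX S p L0 lam0 X0" and "V \<in> gammaX S p L1 lam1 X1"
  shows "ultrafilter_prod X0 X1 U V \<in> gammaX S p (star_set L0 L1) (tensor p lam0 lam1) (X0 \<times> X1)"
proof -
  have U: "ultrafilter_on X0 U" and defined0: "\<forall>s\<in>S. \<forall>i\<in>L0. {x \<in> X0. app_defined p s (lam0 i x)} \<in> U"
    using \<open>U \<in> gammaX S p L0 lam0 X0\<close> unfolding gammaX_def by auto
  have V: "ultrafilter_on X1 V" and defined1: "\<forall>s\<in>S. \<forall>j\<in>L1. {y \<in> X1. app_defined p s (lam1 j y)} \<in> V"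
    using \<open>V \<in> gammaX S p L1 lam1 X1\<close> unfolding gammaX_def by auto
  have "{z \<in> X0 \<times> X1. app_defined p s (tensor p lam0 lam1 k z)} \<in> ultrafilter_prod X0 X1 U V"
    if "s \<in> S" and "k \<in> star_set L0 L1" for s k
  proof -
    from \<open>k \<in> star_set L0 L1\<close> consider i where "k = SL i" "i \<in> L0" | j where "k = SR j" "j \<in> L1"
      | i j where "k = SP i j" "i \<in> L0" "j \<in> L1"
      unfolding star_set_def by auto
    then show ?thesis
    proof cases
      case (1 i)
      then show ?thesis
        using defined0 \<open>s \<in> S\<close>
        by (simp add: Collect_in_ultrafilter_prod_iff ultrafilter_on_const[OF V])
    next
      case (2 j)
      then show ?thesis
        using defined1 \<open>s \<in> S\<close>
        by (simp add: Collect_in_ultrafilter_prod_iff ultrafilter_on_top[OF U])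
    next
      case (3 i j)
      show ?thesis
        unfolding \<open>k = SP i j\<close>
        by (rule tensor_SP_defined_in_prod[OF ps \<open>s \<in> S\<close> U V])
          (use 3 range0 range1 defined0 defined1 \<open>s \<in> S\<close> in auto)
    qed
  qed
  then show ?thesis
    unfolding gammaX_def using ultrafilter_on_prod[OF U V] by simp
qed

theorem proposition3p2:
  fixes S :: "'a set" and p :: "'a \<Rightarrow> 'a \<Rightarrow> 'a option"
    and L0 :: "'i set" and lam0 :: "'i \<Rightarrow> 'x \<Rightarrow> 'a option" and X0 :: "'x set"
    and L1 :: "'j set" and lam1 :: "'j \<Rightarrow> 'y \<Rightarrow> 'a option" and X1 :: "'y set"
  assumes "partial_semigroup S p"
    and "finite L0" and "finite L1"
    and "function_array S p L0 lam0 X0"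
    and "function_array S p L1 lam1 X1"
  shows "\<exists>f g. fa_hom
           (gammaS S p) (gamma_op S p) (star_set L0 L1)
           (tensor (gamma_op S p) (gamma_lam S lam0 X0) (gamma_lam S lam1 X1))
           (gammaX S p L0 lam0 X0 \<times> gammaX S p L1 lam1 X1)
           (gammaS S p) (gamma_op S p)
           (gamma_lam S (tensor p lam0 lam1) (X0 \<times> X1))
           (gammaX S p (star_set L0 L1) (tensor p lam0 lam1) (X0 \<times> X1))
           f g"
proof -
  have range0: "\<forall>i\<in>L0. \<forall>x\<in>X0. set_option (lam0 i x) \<subseteq> S"
    using assms(4) unfolding function_array_def by blast
  have range1: "\<forall>j\<in>L1. \<forall>y\<in>X1. set_option (lam1 j y) \<subseteq> S"
    using assms(5) unfolding function_array_def by blast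
  show ?thesis
    unfolding fa_hom_def
    by (intro exI[of _ "\<lambda>(U, V). ultrafilter_prod X0 X1 U V"] exI[of _ id])
      (use ultrafilter_prod_in_gammaX[OF assms(1) range0 range1]
        gamma_lam_tensor[OF _ _ range0 range1] in \<open>auto simp: gammaX_def option.map_id\<close>)
qed

end
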